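(* Let $n\ge 10$ be an integer and let $\mathcal{F}_n=\{\,|E(F_n(a,b))| : a,b \text{ integers},\ a\ge 0,\ b\ge 2,\ a+b+5\le n\,\}$. Then $$\left[3n-11, \left\lfloor \frac{n-1}{2} \right\rfloor \left\lceil \frac{n-1}{2} \right\rceil +2\right]\subseteq \mathcal{F}_n.$$
   Context: All graphs are finite and simple. For integers $p\le q$, $[p,q]$ denotes $\{p,p+1,\dots,q\}$. For nonnegative integers $n,a,b$ with $n\ge a+b+5$, the graph $F_n(a,b)$ is defined as follows. Its vertex set is the disjoint union $I\cup A_1\cup A_2\cup B_1\cup B_2\cup C$, where $I=\{x\}$, $A_1=\{u_1,u_2\}$, $B_1=\{v_1,v_2\}$, $|A_2|=a$, $|B_2|=b$, $|C|=n-a-b-5$. Its edges are: all pairs between $A_1\cup A_2\cup C$ and $B_2$; all pairs between $A_2$ and $B_1$; all pairs between $x$ and $A_1\cup B_1\cup C$; and the two edges $u_1v_1$ and $u_2v_2$. There are no other edges. (Its number of edges is $b(n-b-3)+n+a-b+1$.) *)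

theory Defs
  imports Main
begin

(* The graph F_n(a,b), labelled on natural numbers:
   x = 0, A1 = {1,2} (u1 = 1, u2 = 2), B1 = {3,4} (v1 = 3, v2 = 4),
   A2 = [5, 5+a), B2 = [5+a, 5+a+b), C = [5+a+b, n).
   Edges of a simple graph are represented as 2-element sets. *)

definition FI :: "nat set" where "FI = {0}"
definition FA1 :: "nat set" where "FA1 = {1, 2}"
definition FB1 :: "nat set" where "FB1 = {3, 4}"
definition FA2 :: "nat \<Rightarrow> nat set" where "FA2 a = {5..<5+a}"
definition FB2 :: "nat \<Rightarrow> nat \<Rightarrow> nat set" where "FB2 a b = {5+a..<5+a+b}"
definition FC :: "nat \<Rightarrow> nat \<Rightarrow> nat \<Rightarrow> nat set" where "FC n a b = {5+a+b..<n}"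

definition F_vertices :: "nat \<Rightarrow> nat \<Rightarrow> nat \<Rightarrow> nat set" where
  "F_vertices n a b = FI \<union> FA1 \<union> FA2 a \<union> FB1 \<union> FB2 a b \<union> FC n a b"

definition F_edges :: "nat \<Rightarrow> nat \<Rightarrow> nat \<Rightarrow> nat set set" where
  "F_edges n a b =
      {{p, q} | p q. p \<in> FA1 \<union> FA2 a \<union> FC n a b \<and> q \<in> FB2 a b}
    \<union> {{p, q} | p q. p \<in> FA2 a \<and> q \<in> FB1}
    \<union> {{p, q} | p q. p \<in> FI \<and> q \<in> FA1 \<union> FB1 \<union> FC n a b}
    \<union> {{1, 3}, {2, 4}}"

definition F_counts :: "nat \<Rightarrow> nat set" where
  "F_counts n = {card (F_edges n a b) | a b. 2 \<le> b \<and> a + b + 5 \<le> n}"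

end

(* For fixed b the edge count b(n-b-3)+n+a-b+1 is affine in a, so as a runs over [0, n-b-5]
   the counts fill the interval [g b, g b + n-b-5] with g b = b(n-b-3)+n-b+1.  Since
   g (b+1) - g b = n-2b-5 <= n-b-4, consecutive intervals abut or overlap, and their right
   ends increase as long as 2b+7 <= n.  Hence the intervals for 2 <= b <= B = (n-5) div 2 cover
   [g 2, g B + n-B-5], whose end points are exactly 3n-11 and
   floor((n-1)/2) ceil((n-1)/2) + 2. *)

theory Submission
  imports Defs
begin

definition bipartite_edges :: "'a set \<Rightarrow> 'a set \<Rightarrow> 'a set set" where
  "bipartite_edges X Y = {{p, q} | p q. p \<in> X \<and> q \<in> Y}"

lemma bipartite_edges_eq_image: "bipartite_edges X Y = (\<lambda>(p, q). {p, q}) ` (X \<times> Y)"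
  unfolding bipartite_edges_def by auto

lemma finite_bipartite_edges: "finite X \<Longrightarrow> finite Y \<Longrightarrow> finite (bipartite_edges X Y)"
  by (simp add: bipartite_edges_eq_image)

lemma card_bipartite_edges:
  assumes "finite X" "finite Y" "X \<inter> Y = {}"
  shows "card (bipartite_edges X Y) = card X * card Y"
proof -
  have "inj_on (\<lambda>(p, q). {p, q}) (X \<times> Y)"
    using assms(3) by (auto simp: inj_on_def doubleton_eq_iff)
  then show ?thesis
    by (simp add: bipartite_edges_eq_image card_image card_cartesian_product)
qed

lemma bipartite_edges_disjoint:
  assumes "X \<inter> (X' \<union> Y') = {} \<or> Y \<inter> (X' \<union> Y') = {}"
  shows "bipartite_edges X Y \<inter> bipartite_edges X' Y' = {}"
  using assms unfolding bipartite_edges_def by (auto simp: doubleton_eq_iff)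

lemma F_edges_eq:
  "F_edges n a b =
      bipartite_edges (FA1 \<union> FA2 a \<union> FC n a b) (FB2 a b)
    \<union> bipartite_edges (FA2 a) FB1
    \<union> bipartite_edges FI (FA1 \<union> FB1 \<union> FC n a b)
    \<union> {{1, 3}, {2, 4}}"
  unfolding F_edges_def bipartite_edges_def by blast

lemma card_F_edges:
  assumes "a + b + 5 \<le> n"
  shows "card (F_edges n a b) = b * (n - b - 3) + n + a - b + 1"
proof -
  obtain c where n: "n = a + b + 5 + c"
    using assms le_Suc_ex by blast
  let ?E_B2 = "bipartite_edges (FA1 \<union> FA2 a \<union> FC n a b) (FB2 a b)"
  let ?E_A2B1 = "bipartite_edges (FA2 a) FB1"
  let ?E_x = "bipartite_edges FI (FA1 \<union> FB1 \<union> FC n a b)"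
  let ?E_M = "{{1, 3}, {2, 4}} :: nat set set"
  have "card ?E_B2 = card (FA1 \<union> FA2 a \<union> FC n a b) * card (FB2 a b)"
    by (rule card_bipartite_edges) (auto simp: FA1_def FA2_def FB2_def FC_def)
  then have card_E_B2: "card ?E_B2 = (2 + a + c) * b"
    using n by (simp add: FA1_def FA2_def FB2_def FC_def card_Un_disjoint)
  have card_E_A2B1: "card ?E_A2B1 = a * 2"
    by (simp add: card_bipartite_edges FA2_def FB1_def)
  have "card ?E_x = card FI * card (FA1 \<union> FB1 \<union> FC n a b)"
    by (rule card_bipartite_edges) (auto simp: FI_def FA1_def FB1_def FC_def)
  then have card_E_x: "card ?E_x = 4 + c"
    using n by (simp add: FI_def FA1_def FB1_def FC_def card_Un_disjoint)
  have card_E_M: "card ?E_M = 2"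
    by (simp add: doubleton_eq_iff)
  have finite: "finite ?E_B2" "finite ?E_A2B1" "finite ?E_x"
    by (simp_all add: finite_bipartite_edges FI_def FA1_def FB1_def FA2_def FB2_def FC_def)
  have disjoint_B2_A2B1: "?E_B2 \<inter> ?E_A2B1 = {}"
    by (intro bipartite_edges_disjoint disjI2) (auto simp: FA1_def FA2_def FB1_def FB2_def FC_def)
  have disjoint_x: "(?E_B2 \<union> ?E_A2B1) \<inter> ?E_x = {}"
  proof -
    have "?E_B2 \<inter> ?E_x = {}"
      by (intro bipartite_edges_disjoint disjI2) (auto simp: FI_def FA1_def FA2_def FB1_def FB2_def FC_def)
    moreover have "?E_A2B1 \<inter> ?E_x = {}"
      by (intro bipartite_edges_disjoint disjI1) (auto simp: FI_def FA1_def FA2_def FB1_def FC_def)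
    ultimately show ?thesis by blast
  qed
  have "{1, 3} \<notin> ?E_B2 \<union> ?E_A2B1 \<union> ?E_x" "{2, 4} \<notin> ?E_B2 \<union> ?E_A2B1 \<union> ?E_x"
    by (auto simp: bipartite_edges_def doubleton_eq_iff FI_def FA1_def FA2_def FB1_def FB2_def FC_def)
  then have disjoint_M: "(?E_B2 \<union> ?E_A2B1 \<union> ?E_x) \<inter> ?E_M = {}"
    by blast
  have "card (F_edges n a b) = card (?E_B2 \<union> ?E_A2B1 \<union> ?E_x) + card ?E_M"
    unfolding F_edges_eq using finite disjoint_M by (intro card_Un_disjoint) auto
  also have "card (?E_B2 \<union> ?E_A2B1 \<union> ?E_x) = card (?E_B2 \<union> ?E_A2B1) + card ?E_x"
    using finite disjoint_x by (intro card_Un_disjoint) auto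
  also have "card (?E_B2 \<union> ?E_A2B1) = card ?E_B2 + card ?E_A2B1"
    using finite disjoint_B2_A2B1 by (intro card_Un_disjoint) auto
  finally have "card (F_edges n a b) = (2 + a + c) * b + a * 2 + (4 + c) + 2"
    using card_E_B2 card_E_A2B1 card_E_x card_E_M by simp
  then show ?thesis
    using n by (simp add: algebra_simps)
qed

lemma atLeastAtMost_subset_UN_atLeastAtMost:
  fixes lo hi :: "nat \<Rightarrow> nat"
  assumes "b\<^sub>0 \<le> B"
    and "\<And>b. b\<^sub>0 \<le> b \<Longrightarrow> b < B \<Longrightarrow> lo (Suc b) \<le> Suc (hi b)"
    and "\<And>b. b\<^sub>0 \<le> b \<Longrightarrow> b < B \<Longrightarrow> hi b \<le> hi (Suc b)"
  shows "{lo b\<^sub>0..hi B} \<subseteq> (\<Union>b\<in>{b\<^sub>0..B}. {lo b..hi b})"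
  using assms
proof (induction B rule: dec_induct)
  case base
  then show ?case by auto
next
  case (step B)
  have "{lo b\<^sub>0..hi (Suc B)} \<subseteq> {lo b\<^sub>0..hi B} \<union> {lo (Suc B)..hi (Suc B)}"
    using step.prems(1)[of B] step.hyps by auto
  also have "\<dots> \<subseteq> (\<Union>b\<in>{b\<^sub>0..Suc B}. {lo b..hi b})"
    using step.IH step.prems step.hyps by force
  finally show ?case .
qed

lemma F_counts_atLeastAtMost:
  assumes "2 \<le> b" "b + 5 \<le> n"
  shows "{b * (n - b - 3) + n - b + 1 .. b * (n - b - 3) + n - b + 1 + (n - b - 5)} \<subseteq> F_counts n"
    (is "{?lo .. ?lo + _} \<subseteq> _")
proof
  fix m
  assume "m \<in> {?lo .. ?lo + (n - b - 5)}"
  then obtain a where a: "a \<le> n - b - 5" "m = ?lo + a"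
    by (metis add_le_cancel_left atLeastAtMost_iff le_add_diff_inverse)
  have size: "a + b + 5 \<le> n"
    using a(1) assms(2) by simp
  then have "m = card (F_edges n a b)"
    using a(2) by (simp add: card_F_edges)
  then show "m \<in> F_counts n"
    unfolding F_counts_def using assms(1) size by blast
qed

lemma F_counts_intervals_overlap:
  fixes n b :: nat
  defines "lo \<equiv> \<lambda>b. b * (n - b - 3) + n - b + 1"
  assumes "2 * b + 7 \<le> n"
  shows "lo (Suc b) \<le> Suc (lo b + (n - b - 5))"
    and "lo b + (n - b - 5) \<le> lo (Suc b) + (n - Suc b - 5)"
proof -
  obtain c where n: "n = 2 * b + 7 + c"
    using assms(2) le_Suc_ex by blast
  have "n - b - 3 = b + 4 + c" "n - Suc b - 3 = b + 3 + c" "n - b - 5 = b + 2 + c" "n - Suc b - 5 = b + 1 + c"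
    using n by simp_all
  then show "lo (Suc b) \<le> Suc (lo b + (n - b - 5))" "lo b + (n - b - 5) \<le> lo (Suc b) + (n - Suc b - 5)"
    unfolding lo_def using n by (simp_all add: algebra_simps)
qed

lemma F_counts_last_interval_end:
  fixes n B :: nat
  assumes "5 \<le> n" "B = (n - 5) div 2"
  shows "B * (n - B - 3) + n - B + 1 + (n - B - 5) = (n - 1) div 2 * (n div 2) + 2"
proof (cases "even n")
  case True
  then have "\<exists>j. n = 2 * j + 6"
    using assms(1) by presburger
  then obtain j where "n = 2 * j + 6"
    by blast
  then show ?thesis
    using assms(2) by (simp add: algebra_simps)
next
  case False
  then have "\<exists>j. n = 2 * j + 5"
    using assms(1) by presburger
  then obtain j where "n = 2 * j + 5"
    by blast
  then show ?thesis
    using assms(2) by (simp add: algebra_simps)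
qed

theorem lemma2p3:
  fixes n :: nat
  assumes "n \<ge> 10"
  shows "{3 * n - 11 .. ((n - 1) div 2) * (n div 2) + 2} \<subseteq> F_counts n"
proof -
  define lo where "lo b = b * (n - b - 3) + n - b + 1" for b
  define hi where "hi b = lo b + (n - b - 5)" for b
  define B where "B = (n - 5) div 2"
  have "3 * n - 11 = lo 2"
    using assms unfolding lo_def by simp
  moreover have "(n - 1) div 2 * (n div 2) + 2 = hi B"
    using F_counts_last_interval_end[OF _ B_def] assms unfolding hi_def lo_def by simp
  moreover have "{lo 2..hi B} \<subseteq> (\<Union>b\<in>{2..B}. {lo b..hi b})"
  proof (rule atLeastAtMost_subset_UN_atLeastAtMost)
    show "2 \<le> B"
      using assms unfolding B_def by simp
    fix b assume "b < B"
    then have "2 * b + 7 \<le> n"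
      unfolding B_def by linarith
    from F_counts_intervals_overlap[OF this]
    show "lo (Suc b) \<le> Suc (hi b)" "hi b \<le> hi (Suc b)"
      unfolding hi_def lo_def by simp_all
  qed
  moreover have "(\<Union>b\<in>{2..B}. {lo b..hi b}) \<subseteq> F_counts n"
  proof (rule UN_least)
    fix b assume "b \<in> {2..B}"
    then have "2 \<le> b" "b + 5 \<le> n"
      unfolding B_def by auto
    then show "{lo b..hi b} \<subseteq> F_counts n"
      unfolding hi_def lo_def by (rule F_counts_atLeastAtMost)
  qed
  ultimately show ?thesis
    by simp
qed

end
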